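(* Let $(L,\wedge,\vee,0,1)$ be a bounded lattice with multiplicative Nakano mosaic $(L,\boxdot,1)$, where $x\boxdot y:=\{z\in L\mid x\wedge y=x\wedge z=z\wedge y\}$. For $x,y,z\in L$, we have $z=x\wedge y$ if and only if $x,y\in z\boxdot z$ and $z\in x\boxdot y$. *)

theory Defs
  imports Main
begin

definition nakano_mult :: "'a::bounded_lattice \<Rightarrow> 'a \<Rightarrow> 'a set" where
  "nakano_mult x y = {z. inf x y = inf x z \<and> inf x z = inf z y}"

end

theory Submission
  imports Defs
begin

lemma mem_nakano_mult_self_iff:
  fixes x z :: "'a::bounded_lattice"
  shows "x \<in> nakano_mult z z \<longleftrightarrow> z \<le> x"
  unfolding nakano_mult_def by (auto simp: inf.absorb_iff1 inf_commute)

lemma lower_bound_mem_nakano_mult_iff: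
  fixes x y z :: "'a::bounded_lattice"
  assumes "z \<le> x" and "z \<le> y"
  shows "z \<in> nakano_mult x y \<longleftrightarrow> z = inf x y"
  using assms unfolding nakano_mult_def
  by (auto simp: inf.absorb2 inf.absorb1)

theorem mainTheorem18:
  fixes x y z :: "'a::bounded_lattice"
  shows "z = inf x y \<longleftrightarrow> (x \<in> nakano_mult z z \<and> y \<in> nakano_mult z z \<and> z \<in> nakano_mult x y)"
  using lower_bound_mem_nakano_mult_iff[of z x y]
  by (auto simp: mem_nakano_mult_self_iff)

end
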